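(* Let $\Omega\subset\mathbb{R}^n$ be a convex open set, let $f:\Omega\to\mathbb{R}$ be bounded, and let $\lambda>0$. Let $\underline f:\overline\Omega\to\mathbb{R}$ be given by $\underline f(x)=\liminf_{y\to x,\,y\in\Omega}f(y)$. Then for every $x\in\Omega$, $$C^l_{\lambda,\Omega}(f^{-}_{\overline\Omega})(x)\le C^l_{\lambda,\Omega}(f)(x)\le C^l_\lambda(f^\infty)(x)\le \underline f(x)\le f(x).$$
   Context: $f^{-}_{\overline\Omega}:\overline\Omega\to\mathbb{R}$ equals $f$ on $\Omega$ and $\inf_\Omega f$ on $\partial\Omega$. $f^\infty:\mathbb{R}^n\to\mathbb{R}\cup\{+\infty\}$ equals $f$ on $\Omega$ and $+\infty$ on $\mathbb{R}^n\setminus\Omega$. For a bounded function $g$ on $\overline\Omega$ and $x\in\overline\Omega$: $M_{\lambda,\Omega}(g)(x)=\inf_{y\in\overline\Omega}\{g(y)+\lambda|y-x|^2\}$, $M^{\lambda}_{\Omega}(g)(x)=\sup_{y\in\overline\Omega}\{g(y)-\lambda|y-x|^2\}$; for $f$ defined only on $\Omega$, $M_{\lambda,\Omega}(f)(x)=\inf_{y\in\Omega}\{f(y)+\lambda|y-x|^2\}$. Local lower transform: $C^l_{\lambda,\Omega}(g)(x)=M^{\lambda}_{\Omega}(M_{\lambda,\Omega}(g))(x)$ for $x\in\overline\Omega$. Global lower transform: $C^l_\lambda(g)(x)=\mathrm{co}[g+\lambda|\cdot|^2](x)-\lambda|x|^2$, where $\mathrm{co}$ is the convex envelope (largest convex function,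 possibly $+\infty$-valued, below the given function). *)

theory Defs
  imports "HOL-Analysis.Analysis" "HOL-Library.Extended_Real"
begin

text \<open>f^-_{closure Omega}: f on Omega, inf_Omega f elsewhere (only used on the closure).\<close>
definition fminus_cl :: "'a set \<Rightarrow> ('a \<Rightarrow> real) \<Rightarrow> 'a \<Rightarrow> real" where
  "fminus_cl \<Omega> f x = (if x \<in> \<Omega> then f x else Inf (f ` \<Omega>))"

definition finf :: "'a set \<Rightarrow> ('a \<Rightarrow> real) \<Rightarrow> 'a \<Rightarrow> ereal" where
  "finf \<Omega> f x = (if x \<in> \<Omega> then ereal (f x) else \<infinity>)"

definition lower_M :: "real \<Rightarrow> 'a::real_normed_vector set \<Rightarrow> ('a \<Rightarrow> real) \<Rightarrow> 'a \<Rightarrow> real" where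
  "lower_M lam S g x = Inf ((\<lambda>y. g y + lam * (norm (y - x))\<^sup>2) ` S)"

definition upper_M :: "real \<Rightarrow> 'a::real_normed_vector set \<Rightarrow> ('a \<Rightarrow> real) \<Rightarrow> 'a \<Rightarrow> real" where
  "upper_M lam S g x = Sup ((\<lambda>y. g y - lam * (norm (y - x))\<^sup>2) ` S)"

definition convex_ereal_fun :: "('a::real_vector \<Rightarrow> ereal) \<Rightarrow> bool" where
  "convex_ereal_fun \<phi> \<longleftrightarrow> convex {(x, t::real). \<phi> x \<le> ereal t}"

definition conv_env :: "('a::real_vector \<Rightarrow> ereal) \<Rightarrow> 'a \<Rightarrow> ereal" where
  "conv_env h x = (SUP \<phi> \<in> {\<phi>. convex_ereal_fun \<phi> \<and> (\<forall>y. \<phi> y \<le> h y)}. \<phi> x)"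

definition global_lower :: "real \<Rightarrow> ('a::real_normed_vector \<Rightarrow> ereal) \<Rightarrow> 'a \<Rightarrow> ereal" where
  "global_lower lam h x = conv_env (\<lambda>y. h y + ereal (lam * (norm y)\<^sup>2)) x - ereal (lam * (norm x)\<^sup>2)"

text \<open>Lower semicontinuous envelope (liminf as y \<rightarrow> x, y in Omega, y = x allowed).\<close>
definition lsc_env :: "'a::topological_space set \<Rightarrow> ('a \<Rightarrow> real) \<Rightarrow> 'a \<Rightarrow> ereal" where
  "lsc_env \<Omega> f x = Liminf (inf (nhds x) (principal \<Omega>)) (\<lambda>y. ereal (f y))"

end

theory Submission
  imports Defs
begin

(*
  The first inequality compares infima over the nested sets Omega and closure Omega.
  For the second, fix y: the function u |-> M_{lam,Omega}(f)(y) - lam |u - y|^2 + lam |u|^2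
  is affine and lies below f^infty + lam |.|^2, hence below its convex envelope; evaluating
  at u = x and taking the supremum over y gives the claim.  For the third, a convex minorant
  of f^infty + lam |.|^2 is bounded above on a ball around x because f is bounded, and a
  convex function bounded above near x is lower semicontinuous at x.
*)

lemma bdd_below_quadratic_penalty:
  fixes g :: "'a::real_normed_vector \<Rightarrow> real"
  assumes "bdd_below (g ` S)" and "0 \<le> lam"
  shows "bdd_below ((\<lambda>y. g y + lam * (norm (y - x))\<^sup>2) ` S)"
proof -
  obtain m where "\<And>y. y \<in> S \<Longrightarrow> m \<le> g y"
    using assms(1) by (auto simp: bdd_below_def)
  then show ?thesis
    using assms(2) by (intro bdd_belowI2[of _ m]) (simp add: add_increasing2)
qed

lemma lower_M_le:
  fixes g :: "'a::real_normed_vector \<Rightarrow> real"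
  assumes "bdd_below (g ` S)" and "0 \<le> lam" and "y \<in> S"
  shows "lower_M lam S g x \<le> g y + lam * (norm (y - x))\<^sup>2"
  unfolding lower_M_def using assms by (intro cInf_lower bdd_below_quadratic_penalty) auto

lemma lower_M_superset_le:
  fixes g h :: "'a::real_normed_vector \<Rightarrow> real"
  assumes "T \<noteq> {}" and "T \<subseteq> S" and "\<And>y. y \<in> T \<Longrightarrow> g y \<le> h y"
    and "bdd_below (g ` S)" and "0 \<le> lam"
  shows "lower_M lam S g x \<le> lower_M lam T h x"
proof -
  have "lower_M lam S g x \<le> h y + lam * (norm (y - x))\<^sup>2" if "y \<in> T" for y
    using lower_M_le[OF assms(4,5), of y x] assms(2,3) that by fastforce
  then show ?thesis
    unfolding lower_M_def[of lam T] using assms(1) by (intro cINF_greatest) auto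
qed

lemma upper_M_mono:
  fixes g h :: "'a::real_normed_vector \<Rightarrow> real"
  assumes "S \<noteq> {}" and "\<And>y. y \<in> S \<Longrightarrow> g y \<le> h y"
    and "bdd_above ((\<lambda>y. h y - lam * (norm (y - x))\<^sup>2) ` S)"
  shows "upper_M lam S g x \<le> upper_M lam S h x"
  unfolding upper_M_def using assms by (intro cSUP_mono) force+

lemma bdd_below_fminus_cl:
  assumes "bdd_below (f ` \<Omega>)"
  shows "bdd_below (fminus_cl \<Omega> f ` S)"
  using assms by (intro bdd_belowI2[of _ "Inf (f ` \<Omega>)"]) (simp add: fminus_cl_def cInf_lower)

lemma upper_M_lower_M_fminus_cl_le:
  fixes f :: "'a::real_normed_vector \<Rightarrow> real"
  assumes "bdd_below (f ` \<Omega>)" and "0 \<le> lam" and "x \<in> \<Omega>"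
  shows "upper_M lam (closure \<Omega>) (lower_M lam (closure \<Omega>) (fminus_cl \<Omega> f)) x
           \<le> upper_M lam (closure \<Omega>) (lower_M lam \<Omega> f) x"
proof (rule upper_M_mono)
  show "closure \<Omega> \<noteq> {}"
    using assms(3) closure_subset by auto
  show "lower_M lam (closure \<Omega>) (fminus_cl \<Omega> f) y \<le> lower_M lam \<Omega> f y" for y
    using assms closure_subset
    by (intro lower_M_superset_le bdd_below_fminus_cl) (auto simp: fminus_cl_def)
  have "lower_M lam \<Omega> f y - lam * (norm (y - x))\<^sup>2 \<le> f x" for y
    using lower_M_le[OF assms, of y] by (simp add: norm_minus_commute)
  then show "bdd_above ((\<lambda>y. lower_M lam \<Omega> f y - lam * (norm (y - x))\<^sup>2) ` closure \<Omega>)"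
    by (intro bdd_aboveI2)
qed

lemma convex_ereal_fun_ereal_iff:
  fixes g :: "'a::real_vector \<Rightarrow> real"
  shows "convex_ereal_fun (\<lambda>u. ereal (g u)) \<longleftrightarrow> convex_on UNIV g"
proof -
  have "{(u, t). ereal (g u) \<le> ereal t} = epigraph UNIV g"
    by (auto simp: epigraph_def)
  then show ?thesis
    by (simp add: convex_ereal_fun_def convex_epigraph)
qed

lemma convex_on_affine:
  fixes a :: "'a::real_inner"
  shows "convex_on UNIV (\<lambda>u. b + a \<bullet> u)"
proof (rule convex_onI)
  fix t :: real and u v :: 'a
  have "b = (1 - t) * b + t * b"
    by (simp add: algebra_simps)
  then show "b + a \<bullet> ((1 - t) *\<^sub>R u + t *\<^sub>R v) \<le> (1 - t) * (b + a \<bullet> u) + t * (b + a \<bullet> v)"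
    by (simp add: inner_add_right algebra_simps)
qed simp

lemma conv_env_upper:
  assumes "convex_ereal_fun \<phi>" and "\<And>y. \<phi> y \<le> h y"
  shows "\<phi> x \<le> conv_env h x"
  unfolding conv_env_def using assms by (auto intro: SUP_upper)

lemma less_conv_envE:
  assumes "c < conv_env h x"
  obtains \<phi> where "convex_ereal_fun \<phi>" and "\<And>y. \<phi> y \<le> h y" and "c < \<phi> x"
  using assms unfolding conv_env_def by (auto simp: less_SUP_iff)

lemma lower_M_minus_quadratic_le_global_lower:
  fixes f :: "'a::real_inner \<Rightarrow> real"
  assumes "bdd_below (f ` \<Omega>)" and "0 \<le> lam"
  shows "ereal (lower_M lam \<Omega> f y - lam * (norm (y - x))\<^sup>2) \<le> global_lower lam (finf \<Omega> f) x"
proof -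
  define c where "c = lower_M lam \<Omega> f y"
  define a where "a u = c - lam * (norm (u - y))\<^sup>2 + lam * (norm u)\<^sup>2" for u
  have affine: "a = (\<lambda>u. (c - lam * (norm y)\<^sup>2) + ((2 * lam) *\<^sub>R y) \<bullet> u)"
    by (auto simp: a_def power2_norm_eq_inner inner_diff_left inner_diff_right inner_commute
        algebra_simps)
  have "convex_ereal_fun (\<lambda>u. ereal (a u))"
    unfolding convex_ereal_fun_ereal_iff affine by (rule convex_on_affine)
  moreover have "ereal (a u) \<le> finf \<Omega> f u + ereal (lam * (norm u)\<^sup>2)" for u
    using lower_M_le[OF assms, of u y] by (cases "u \<in> \<Omega>") (simp_all add: finf_def a_def c_def)
  ultimately have "ereal (a x) \<le> conv_env (\<lambda>u. finf \<Omega> f u + ereal (lam * (norm u)\<^sup>2)) x"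
    by (rule conv_env_upper)
  then show ?thesis
    unfolding global_lower_def
    by (cases "conv_env (\<lambda>u. finf \<Omega> f u + ereal (lam * (norm u)\<^sup>2)) x")
      (auto simp: a_def c_def norm_minus_commute)
qed

lemma upper_M_le_global_lower:
  fixes f :: "'a::real_inner \<Rightarrow> real"
  assumes "bdd_below (f ` \<Omega>)" and "0 \<le> lam" and "S \<noteq> {}"
  shows "ereal (upper_M lam S (lower_M lam \<Omega> f) x) \<le> global_lower lam (finf \<Omega> f) x"
proof (cases "global_lower lam (finf \<Omega> f) x")
  case (real r)
  have "upper_M lam S (lower_M lam \<Omega> f) x \<le> r"
    unfolding upper_M_def
    using assms(3) lower_M_minus_quadratic_le_global_lower[OF assms(1,2), where x = x] real
    by (intro cSUP_least) auto
  then show ?thesis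
    using real by simp
next
  case MInf
  moreover obtain y where "y \<in> S"
    using assms(3) by blast
  ultimately show ?thesis
    using lower_M_minus_quadratic_le_global_lower[OF assms(1,2), of y x] by simp
qed simp

lemma convex_ereal_fun_eventually_greater:
  fixes \<phi> :: "'a::real_normed_vector \<Rightarrow> ereal"
  assumes "convex_ereal_fun \<phi>" and "0 < r" and "\<And>w. w \<in> ball x r \<Longrightarrow> \<phi> w \<le> ereal M"
    and "c < \<phi> x"
  shows "\<forall>\<^sub>F y in nhds x. c < \<phi> y"
proof -
  obtain c1 where c1: "c < ereal c1" "ereal c1 < \<phi> x"
    using ereal_dense2[OF assms(4)] by blast
  obtain c2 where c2: "c1 < c2" "ereal c2 < \<phi> x"
    using ereal_dense2[OF c1(2)] by auto
  have "c2 < M"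
    using less_le_trans[OF c2(2) assms(3)[of x]] assms(2) by simp
  define t where "t = (c2 - c1) / (2 * (M - c1))"
  have t: "0 < t" "t \<le> 1/2" "t * (M - c1) = (c2 - c1) / 2"
    using c2 \<open>c2 < M\<close> by (auto simp: t_def field_simps)
  have "\<forall>\<^sub>F y in nhds x. y \<in> ball x (t * r)"
    using t assms(2) by (intro eventually_nhds_in_open) auto
  then show ?thesis
  proof eventually_elim
    case (elim y)
    show "c < \<phi> y"
    proof (rule ccontr)
      assume "\<not> c < \<phi> y"
      then have "\<phi> y \<le> ereal c1"
        using c1(1) by simp
      \<comment> \<open>the point beyond x on the ray from y, chosen so that x = (1 - t) y + t w\<close>
      define w where "w = x + ((1 - t) / t) *\<^sub>R (x - y)"
      have "norm (w - x) = ((1 - t) / t) * norm (x - y)"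
        using t unfolding w_def by simp
      also have "\<dots> < ((1 - t) / t) * (t * r)"
        using elim t by (intro mult_strict_left_mono) (auto simp: dist_norm)
      also have "\<dots> \<le> r"
        using t assms(2) by (simp add: field_simps)
      finally have "\<phi> w \<le> ereal M"
        by (intro assms(3)) (simp add: dist_norm norm_minus_commute)
      have "t *\<^sub>R w = t *\<^sub>R x + (1 - t) *\<^sub>R (x - y)"
        using t unfolding w_def by (simp add: scaleR_add_right)
      then have "(1 - t) *\<^sub>R y + t *\<^sub>R w = x"
        by (simp add: algebra_simps)
      moreover have "(1 - t) *\<^sub>R (y, c1) + t *\<^sub>R (w, M) \<in> {(u, s). \<phi> u \<le> ereal s}"
        using assms(1) \<open>\<phi> y \<le> ereal c1\<close> \<open>\<phi> w \<le> ereal M\<close> t unfolding convex_ereal_fun_def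
        by (intro convexD) auto
      ultimately have "\<phi> x \<le> ereal (c1 + t * (M - c1))"
        by (simp add: algebra_simps)
      moreover have "ereal (c1 + t * (M - c1)) < \<phi> x"
        using c2(1) by (intro less_trans[OF _ c2(2)]) (simp add: t(3) field_simps)
      ultimately show False
        by simp
    qed
  qed
qed

lemma bounded_plus_quadratic_on_ball:
  fixes f :: "'a::real_normed_vector \<Rightarrow> real"
  assumes "bounded (f ` \<Omega>)" and "0 \<le> lam" and "ball x r \<subseteq> \<Omega>"
  obtains M where "\<And>u. u \<in> ball x r \<Longrightarrow> f u + lam * (norm u)\<^sup>2 \<le> M"
proof -
  obtain B where B: "\<And>u. u \<in> \<Omega> \<Longrightarrow> \<bar>f u\<bar> \<le> B"
    using assms(1) by (auto simp: bounded_iff)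
  obtain R where R: "\<And>u. u \<in> ball x r \<Longrightarrow> norm u \<le> R"
    using bounded_ball[of x r] unfolding bounded_iff by blast
  have "f u + lam * (norm u)\<^sup>2 \<le> B + lam * R\<^sup>2" if "u \<in> ball x r" for u
  proof -
    have "f u \<le> B"
      using B[of u] assms(3) that by auto
    moreover have "lam * (norm u)\<^sup>2 \<le> lam * R\<^sup>2"
      using R[OF that] assms(2) by (intro mult_left_mono power_mono) auto
    ultimately show ?thesis
      by linarith
  qed
  then show ?thesis
    using that by blast
qed

lemma global_lower_le_lsc_env:
  fixes f :: "'a::real_inner \<Rightarrow> real"
  assumes "open \<Omega>" and "x \<in> \<Omega>" and "bounded (f ` \<Omega>)" and "0 \<le> lam"
  shows "global_lower lam (finf \<Omega> f) x \<le> lsc_env \<Omega> f x"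
  unfolding lsc_env_def le_Liminf_iff
proof (intro allI impI)
  fix c
  assume c: "c < global_lower lam (finf \<Omega> f) x"
  define h where "h u = finf \<Omega> f u + ereal (lam * (norm u)\<^sup>2)" for u
  show "\<forall>\<^sub>F y in inf (nhds x) (principal \<Omega>). c < ereal (f y)"
  proof (cases c)
    case (real a)
    have "ereal (a + lam * (norm x)\<^sup>2) < conv_env h x"
      using c real unfolding global_lower_def h_def
      by (cases "conv_env (\<lambda>u. finf \<Omega> f u + ereal (lam * (norm u)\<^sup>2)) x") auto
    then obtain \<phi> where \<phi>: "convex_ereal_fun \<phi>" "\<And>u. \<phi> u \<le> h u"
      and "ereal (a + lam * (norm x)\<^sup>2) < \<phi> x"
      by (elim less_conv_envE) blast
    then obtain d where d: "a + lam * (norm x)\<^sup>2 < d" "ereal d < \<phi> x"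
      using ereal_dense2 by fastforce
    obtain r where r: "0 < r" "ball x r \<subseteq> \<Omega>"
      using assms(1,2) open_contains_ball by blast
    obtain M where M: "\<And>u. u \<in> ball x r \<Longrightarrow> f u + lam * (norm u)\<^sup>2 \<le> M"
      using bounded_plus_quadratic_on_ball[OF assms(3,4) r(2)] by blast
    have "\<phi> u \<le> ereal M" if "u \<in> ball x r" for u
    proof -
      have "h u = ereal (f u + lam * (norm u)\<^sup>2)"
        using that r(2) by (auto simp: h_def finf_def)
      then show ?thesis
        using \<phi>(2)[of u] M[OF that] by (metis ereal_less_eq(3) order_trans)
    qed
    then have "\<forall>\<^sub>F y in nhds x. ereal d < \<phi> y"
      using \<phi>(1) d(2) r(1) by (intro convex_ereal_fun_eventually_greater)
    moreover have "\<forall>\<^sub>F y in nhds x. lam * (norm y)\<^sup>2 < d - a"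
    proof (rule order_tendstoD)
      show "((\<lambda>y. lam * (norm y)\<^sup>2) \<longlongrightarrow> lam * (norm x)\<^sup>2) (nhds x)"
        by (intro tendsto_intros) (rule filterlim_ident)
    qed (use d(1) in simp)
    ultimately have "\<forall>\<^sub>F y in nhds x. y \<in> \<Omega> \<longrightarrow> c < ereal (f y)"
    proof eventually_elim
      case (elim y)
      show ?case
      proof
        assume "y \<in> \<Omega>"
        then have "ereal d < ereal (f y + lam * (norm y)\<^sup>2)"
          using less_le_trans[OF elim(1) \<phi>(2)[of y]] by (simp add: h_def finf_def)
        then show "c < ereal (f y)"
          using elim(2) real by simp
      qed
    qed
    then show ?thesis
      by (simp add: eventually_inf_principal)
  qed (use c in auto)
qed

lemma lsc_env_le:
  assumes "x \<in> \<Omega>"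
  shows "lsc_env \<Omega> f x \<le> ereal (f x)"
  unfolding lsc_env_def Liminf_def
proof (rule SUP_least)
  fix P
  assume "P \<in> {P. eventually P (inf (nhds x) (principal \<Omega>))}"
  then have "P x"
    using assms eventually_nhds_x_imp_x by (fastforce simp: eventually_inf_principal)
  then show "(INF y\<in>Collect P. ereal (f y)) \<le> ereal (f x)"
    by (intro INF_lower) simp
qed

theorem proposition2p9:
  fixes \<Omega> :: "'a::euclidean_space set" and f :: "'a \<Rightarrow> real" and lam :: real and x :: 'a
  assumes "open \<Omega>" and "convex \<Omega>" and "bounded (f ` \<Omega>)" and "lam > 0" and "x \<in> \<Omega>"
  shows "ereal (upper_M lam (closure \<Omega>) (lower_M lam (closure \<Omega>) (fminus_cl \<Omega> f)) x)
           \<le> ereal (upper_M lam (closure \<Omega>) (lower_M lam \<Omega> f) x)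
       \<and> ereal (upper_M lam (closure \<Omega>) (lower_M lam \<Omega> f) x) \<le> global_lower lam (finf \<Omega> f) x
       \<and> global_lower lam (finf \<Omega> f) x \<le> lsc_env \<Omega> f x
       \<and> lsc_env \<Omega> f x \<le> ereal (f x)"
proof -
  have bdd: "bdd_below (f ` \<Omega>)"
    using assms(3) by (rule bounded_imp_bdd_below)
  have lam: "0 \<le> lam"
    using assms(4) by simp
  have "closure \<Omega> \<noteq> {}"
    using assms(5) closure_subset by auto
  then show ?thesis
    using upper_M_lower_M_fminus_cl_le[OF bdd lam assms(5)] upper_M_le_global_lower[OF bdd lam]
      global_lower_le_lsc_env[OF assms(1,5,3) lam] lsc_env_le[OF assms(5)]
    by simp
qed

end
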